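(* Let $p$ be an odd prime and $m=p-1$. Let $O$ be either $\tilde D_b$ or $\tilde E_b$ for any $b\in\{0,1,\ldots,p-1\}$ (an $m\times m$ sequence design). Then: (i) $O$ is a Latin square, i.e., every row and every column of $O$ is a permutation of $\{1,\ldots,m\}$; (ii) $O$ is pair-balanced with $t_{i,j}=1$ for all $1\le i\ne j\le m$; (iii) $d_H(O)=m$.
   Context: Let $p$ be an odd prime, $m=p-1$, $h=(1,\ldots,m)$. The good lattice point set $D_0$ is the $p\times m$ matrix whose $i$th row is $i\,h \pmod p$, $i=1,\ldots,p$ (so its last row is $(0,\ldots,0)$). The Williams transformation $W:\{0,\ldots,p-1\}\to\{0,\ldots,p-1\}$ is $W(x)=2x$ for $0\le x<p/2$ and $W(x)=2(p-x)-1$ for $p/2\le x\le p-1$. For $b\in\{0,\ldots,p-1\}$, $D_b=D_0+b\pmod p$ entrywise (last row $(b,\ldots,b)$) and $E_b=W(D_b)$ entrywise (last row $(W(b),\ldots,W(b))$). The leave-one-out design $\tilde D_b$ is obtained from $D_b$ by deleting its last row and replacing each entry $x$ by $x+1$ if $x<b$ and leaving it as $x$ if $x>b$; $\tilde E_b$ is obtained from $E_b$ by deleting its last row and replacing each entry $x$ by $x+1$ if $x<W(b)$ and by $x$ if $x>W(b)$. Both are $m\times m$ matrices with entries in $\{1,\ldots,m\}$. A sequence design is a matrix each of whose rows is a permutation of $\{1,\ldots,m\}$. For $i\ne j$, $t_{i,j}$ is the number of times component $i$ is immediately followed by component $j$ (i.e., the number of pairs (row $r$, position $s$) with $O_{rs}=i$,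 $O_{r,s+1}=j$). $O$ is pair-balanced if all $t_{i,j}$, $i\ne j$, are equal. $d_H(o_i,o_j)=\#\{k:o_{ik}\ne o_{jk}\}$ and $d_H(O)$ is the minimum over distinct row pairs. *)

theory Defs
  imports "HOL-Computational_Algebra.Primes"
begin

text \<open>Matrices are functions nat => nat => nat; row index r and column index k
  both range over {1..m} (1-based, as in the paper), m = p - 1.\<close>

definition williams :: "nat \<Rightarrow> nat \<Rightarrow> nat" where
  "williams p x = (if 2 * x < p then 2 * x else 2 * (p - x) - 1)"

text \<open>D_b: entry (r,k) = (r*k + b) mod p, for rows r = 1..p (row p is (b,...,b)).\<close>
definition Dmat :: "nat \<Rightarrow> nat \<Rightarrow> nat \<Rightarrow> nat \<Rightarrow> nat" where
  "Dmat p b r k = (r * k + b) mod p"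

definition Emat :: "nat \<Rightarrow> nat \<Rightarrow> nat \<Rightarrow> nat \<Rightarrow> nat" where
  "Emat p b r k = williams p (Dmat p b r k)"

text \<open>leave-one-out relabelling relative to the value c of the deleted last row\<close>
definition loo :: "nat \<Rightarrow> nat \<Rightarrow> nat" where
  "loo c x = (if x < c then x + 1 else x)"

text \<open>Leave-one-out designs (last row deleted: only rows 1..p-1 are considered).\<close>
definition Dtilde :: "nat \<Rightarrow> nat \<Rightarrow> nat \<Rightarrow> nat \<Rightarrow> nat" where
  "Dtilde p b r k = loo b (Dmat p b r k)"

definition Etilde :: "nat \<Rightarrow> nat \<Rightarrow> nat \<Rightarrow> nat \<Rightarrow> nat" where
  "Etilde p b r k = loo (williams p b) (Emat p b r k)"

definition latin_square :: "nat \<Rightarrow> (nat \<Rightarrow> nat \<Rightarrow> nat) \<Rightarrow> bool" where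
  "latin_square m A \<longleftrightarrow>
     (\<forall>r\<in>{1..m}. bij_betw (\<lambda>k. A r k) {1..m} {1..m}) \<and>
     (\<forall>k\<in>{1..m}. bij_betw (\<lambda>r. A r k) {1..m} {1..m})"

definition tcount :: "nat \<Rightarrow> (nat \<Rightarrow> nat \<Rightarrow> nat) \<Rightarrow> nat \<Rightarrow> nat \<Rightarrow> nat" where
  "tcount m A i j = card {(r, s). r \<in> {1..m} \<and> s \<in> {1..<m} \<and> A r s = i \<and> A r (s + 1) = j}"

definition pair_balanced :: "nat \<Rightarrow> (nat \<Rightarrow> nat \<Rightarrow> nat) \<Rightarrow> bool" where
  "pair_balanced m A \<longleftrightarrow>
     (\<forall>i\<in>{1..m}. \<forall>j\<in>{1..m}. \<forall>i'\<in>{1..m}. \<forall>j'\<in>{1..m}.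
        i \<noteq> j \<longrightarrow> i' \<noteq> j' \<longrightarrow> tcount m A i j = tcount m A i' j')"

definition hamming :: "nat \<Rightarrow> (nat \<Rightarrow> nat \<Rightarrow> nat) \<Rightarrow> nat \<Rightarrow> nat \<Rightarrow> nat" where
  "hamming m A r1 r2 = card {k \<in> {1..m}. A r1 k \<noteq> A r2 k}"

definition dH :: "nat \<Rightarrow> (nat \<Rightarrow> nat \<Rightarrow> nat) \<Rightarrow> nat" where
  "dH m A = Min {hamming m A r1 r2 | r1 r2. r1 \<in> {1..m} \<and> r2 \<in> {1..m} \<and> r1 \<noteq> r2}"

end

theory Submission
  imports Defs "HOL-Number_Theory.Cong"
begin

text \<open>Off the deleted row the lattice \<open>(r * k + b) mod p\<close> never takes the value \<open>b\<close>, so both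
  designs are \<open>g ((r * k + b) mod p)\<close> for a bijection \<open>g\<close> from the other residues onto
  \<open>{1..m}\<close> (the relabelling, composed with the Williams map for \<open>Etilde\<close>). Rows and columns of
  the lattice are injective, so the design is a Latin square and distinct rows disagree
  everywhere. In row \<open>r\<close> consecutive entries differ by \<open>r\<close> modulo \<open>p\<close>; hence a pair
  \<open>i \<noteq> j\<close> with preimages \<open>x, y\<close> occurs as neighbours only in row \<open>y - x\<close>, at the unique
  position where that row takes the value \<open>x\<close>, which is never the last one because column \<open>p\<close>
  would carry the value \<open>b\<close>.\<close>

lemma bij_betw_loo:
  assumes "c < n"
  shows "bij_betw (loo c) ({..<n} - {c}) {1..n-1}"
  by (rule bij_betw_byWitness[where f' = "\<lambda>y. if y \<le> c then y - 1 else y"])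
    (use assms in \<open>auto simp: loo_def\<close>)

lemma bij_betw_williams: "bij_betw (williams n) {..<n} {..<n}"
  by (rule bij_betw_byWitness[where f' = "\<lambda>y. if even y then y div 2 else n - (y + 1) div 2"])
    (auto simp: williams_def; presburger)+

lemma bij_betw_affine_mod_prime:
  fixes p b r :: nat
  assumes "prime p" "b < p" "r \<in> {1..p-1}"
  shows "bij_betw (\<lambda>k. (r * k + b) mod p) {1..p-1} ({..<p} - {b})"
proof -
  have "p > 1" using assms(1) prime_gt_1_nat by blast
  have not_dvd: "\<not> p dvd k" if "k \<in> {1..p-1}" for k
    using that by (auto dest: dvd_imp_le)
  have "coprime r p"
    using prime_imp_coprime[OF assms(1) not_dvd[OF assms(3)]] by (simp add: coprime_commute)
  have inj: "inj_on (\<lambda>k. (r * k + b) mod p) {1..p-1}"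
  proof (rule inj_onI)
    fix x y assume "x \<in> {1..p-1}" "y \<in> {1..p-1}" "(r * x + b) mod p = (r * y + b) mod p"
    moreover from this have "[r * x = r * y] (mod p)"
      by (simp add: cong_def[symmetric] cong_add_rcancel_nat)
    then have "[x = y] (mod p)" using cong_mult_lcancel_nat[OF \<open>coprime r p\<close>] by simp
    ultimately show "x = y" by (auto simp: cong_def)
  qed
  have "(r * k + b) mod p \<noteq> b" if "k \<in> {1..p-1}" for k
  proof
    assume "(r * k + b) mod p = b"
    then have "[r * k + b = 0 + b] (mod p)" using assms(2) by (simp add: cong_def)
    then have "p dvd r * k" using cong_add_rcancel_nat[of "r * k" b 0 p] by (simp add: cong_0_iff)
    then show False using assms(1,3) that not_dvd prime_dvd_mult_iff by blast
  qed
  then have "(\<lambda>k. (r * k + b) mod p) ` {1..p-1} \<subseteq> {..<p} - {b}"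
    using \<open>p > 1\<close> by auto
  then have "(\<lambda>k. (r * k + b) mod p) ` {1..p-1} = {..<p} - {b}"
    by (rule card_subset_eq[rotated]) (use inj assms(2) \<open>p > 1\<close> in \<open>auto simp: card_image\<close>)
  with inj show ?thesis by (simp add: bij_betw_def)
qed

lemma hamming_latin_square:
  assumes "latin_square m A" "r1 \<in> {1..m}" "r2 \<in> {1..m}" "r1 \<noteq> r2"
  shows "hamming m A r1 r2 = m"
proof -
  have "A r1 k \<noteq> A r2 k" if "k \<in> {1..m}" for k
  proof
    assume "A r1 k = A r2 k"
    moreover have "inj_on (\<lambda>r. A r k) {1..m}"
      using assms(1) that by (simp add: latin_square_def bij_betw_def)
    ultimately show False using assms(2-4) by (auto dest: inj_onD)
  qed
  then have "{k \<in> {1..m}. A r1 k \<noteq> A r2 k} = {1..m}" by auto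
  then show ?thesis by (simp add: hamming_def)
qed

lemma dH_latin_square:
  assumes "latin_square m A" "2 \<le> m"
  shows "dH m A = m"
proof -
  have "{hamming m A r1 r2 | r1 r2. r1 \<in> {1..m} \<and> r2 \<in> {1..m} \<and> r1 \<noteq> r2} = {m}"
  proof
    show "{m} \<subseteq> {hamming m A r1 r2 | r1 r2. r1 \<in> {1..m} \<and> r2 \<in> {1..m} \<and> r1 \<noteq> r2}"
      using hamming_latin_square[OF assms(1), of 1 2] assms(2)
      by (intro subsetI CollectI exI[of _ 1] exI[of _ 2]) simp
  qed (use hamming_latin_square[OF assms(1)] in auto)
  then show ?thesis by (simp add: dH_def)
qed

lemma latin_square_relabelled_lattice:
  assumes "prime p" "b < p" "bij_betw g ({..<p} - {b}) {1..p-1}"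
  shows "latin_square (p - 1) (\<lambda>r k. g ((r * k + b) mod p))"
  unfolding latin_square_def
proof (intro conjI ballI)
  fix r assume "r \<in> {1..p-1}"
  from bij_betw_trans[OF bij_betw_affine_mod_prime[OF assms(1,2) this] assms(3)]
  show "bij_betw (\<lambda>k. g ((r * k + b) mod p)) {1..p-1} {1..p-1}" by (simp add: o_def)
next
  fix k assume "k \<in> {1..p-1}"
  from bij_betw_trans[OF bij_betw_affine_mod_prime[OF assms(1,2) this] assms(3)]
  show "bij_betw (\<lambda>r. g ((r * k + b) mod p)) {1..p-1} {1..p-1}" by (simp add: o_def mult.commute)
qed

lemma affine_mod_Suc:
  fixes p b r s :: nat
  shows "(r * (s + 1) + b) mod p = ((r * s + b) mod p + r) mod p"
proof -
  have "r * (s + 1) + b = (r * s + b) + r" by simp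
  then show ?thesis by (simp only: mod_add_left_eq)
qed

lemma ex1_shift_mod:
  fixes p x y :: nat
  assumes "x < p" "y < p" "x \<noteq> y"
  shows "\<exists>!r. r \<in> {1..p-1} \<and> (x + r) mod p = y"
proof
  define r0 where "r0 = (y + p - x) mod p"
  have "r0 \<noteq> 0"
  proof (cases "x < y")
    case True
    then have "r0 = (y - x + p) mod p" by (simp add: r0_def)
    also have "\<dots> = y - x" using assms(2) by simp
    finally have "r0 = y - x" .
    then show ?thesis using True by simp
  next
    case False
    with assms(3) have "y < x" by simp
    with assms(1) have "y + p - x < p" by linarith
    then have "r0 = y + p - x" by (simp add: r0_def)
    then show ?thesis using \<open>y < x\<close> assms(1) by simp
  qed
  moreover have "r0 < p" using assms(1) by (simp add: r0_def)
  moreover have "(x + r0) mod p = (x + (y + p - x)) mod p" by (simp add: r0_def mod_add_right_eq)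
  ultimately show r0: "r0 \<in> {1..p-1} \<and> (x + r0) mod p = y" using assms(1,2) by simp
  fix r assume r: "r \<in> {1..p-1} \<and> (x + r) mod p = y"
  then have "[x + r = x + r0] (mod p)" using r0 by (simp add: cong_def)
  then have "[r = r0] (mod p)" by (simp add: cong_add_lcancel_nat)
  moreover have "r < p" "r0 < p" using r r0 assms(1) by auto
  ultimately show "r = r0" by (simp add: cong_def)
qed

lemma card_consecutive_lattice_entries:
  fixes p b x y :: nat
  assumes "prime p" "b < p" "x \<in> {..<p} - {b}" "y \<in> {..<p} - {b}" "x \<noteq> y"
  shows "card {(r, s). r \<in> {1..p-1} \<and> s \<in> {1..<p-1}
                 \<and> (r * s + b) mod p = x \<and> (r * (s + 1) + b) mod p = y} = 1"
    (is "card ?S = 1")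
proof -
  have "p > 1" using assms(1) prime_gt_1_nat by blast
  have "x < p" "y < p" using assms(3,4) by auto
  from ex1_shift_mod[OF this assms(5)] obtain r0 where r0: "r0 \<in> {1..p-1}" "(x + r0) mod p = y"
    and r0_unique: "\<And>r. r \<in> {1..p-1} \<Longrightarrow> (x + r) mod p = y \<Longrightarrow> r = r0"
    by (elim ex1E) blast
  note affine = bij_betw_affine_mod_prime[OF assms(1,2) r0(1)]
  have "x \<in> (\<lambda>k. (r0 * k + b) mod p) ` {1..p-1}"
    using bij_betw_imp_surj_on[OF affine] assms(3) by simp
  then obtain s0 where x_eq: "x = (r0 * s0 + b) mod p" and s0: "s0 \<in> {1..p-1}"
    by (rule imageE)
  have y0: "(r0 * (s0 + 1) + b) mod p = y" using affine_mod_Suc x_eq r0(2) by simp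
  have "s0 \<noteq> p - 1"
  proof
    assume "s0 = p - 1"
    then have "(r0 * (s0 + 1) + b) mod p = b" using \<open>p > 1\<close> assms(2) by simp
    then show False using y0 assms(4) by auto
  qed
  have "?S = {(r0, s0)}"
  proof (intro equalityI subsetI)
    fix z assume "z \<in> ?S"
    then obtain r s where z: "z = (r, s)" and r: "r \<in> {1..p-1}" and s: "s \<in> {1..<p-1}"
      and rs_x: "(r * s + b) mod p = x" and rs_y: "(r * (s + 1) + b) mod p = y" by blast
    have "(x + r) mod p = y" using affine_mod_Suc[of r s] rs_x rs_y by simp
    with r have "r = r0" by (rule r0_unique)
    have "s \<in> {1..p-1}" using s by simp
    moreover have "(r0 * s + b) mod p = (r0 * s0 + b) mod p"
      using rs_x x_eq \<open>r = r0\<close> by simp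
    ultimately have "s = s0" using inj_onD[OF bij_betw_imp_inj_on[OF affine]] s0 by blast
    with z \<open>r = r0\<close> show "z \<in> {(r0, s0)}" by simp
  next
    fix z assume "z \<in> {(r0, s0)}"
    moreover have "s0 \<in> {1..<p-1}" using s0 \<open>s0 \<noteq> p - 1\<close> by simp
    ultimately show "z \<in> ?S" using r0(1) x_eq y0 by simp
  qed
  then show ?thesis by simp
qed

lemma tcount_relabelled_lattice:
  assumes "prime p" "b < p" "bij_betw g ({..<p} - {b}) {1..p-1}"
    and "i \<in> {1..p-1}" "j \<in> {1..p-1}" "i \<noteq> j"
  shows "tcount (p - 1) (\<lambda>r k. g ((r * k + b) mod p)) i j = 1"
proof -
  obtain x y where xy: "x \<in> {..<p} - {b}" "g x = i" "y \<in> {..<p} - {b}" "g y = j"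
    using bij_betw_imp_surj_on[OF assms(3)] assms(4,5) by (metis imageE)
  have in_dom: "(r * k + b) mod p \<in> {..<p} - {b}" if "r \<in> {1..p-1}" "k \<in> {1..p-1}" for r k
    using bij_betw_apply[OF bij_betw_affine_mod_prime[OF assms(1,2) that(1)] that(2)] .
  have g_eq_iff: "g ((r * k + b) mod p) = g z \<longleftrightarrow> (r * k + b) mod p = z"
    if "r \<in> {1..p-1}" "k \<in> {1..p-1}" "z \<in> {..<p} - {b}" for r k z
    using inj_on_eq_iff[OF bij_betw_imp_inj_on[OF assms(3)] in_dom[OF that(1,2)] that(3)] .
  have consecutive_iff: "g ((r * s + b) mod p) = i \<and> g ((r * (s + 1) + b) mod p) = j
      \<longleftrightarrow> (r * s + b) mod p = x \<and> (r * (s + 1) + b) mod p = y"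
    if "r \<in> {1..p-1}" "s \<in> {1..<p-1}" for r s
  proof -
    have "s \<in> {1..p-1}" "s + 1 \<in> {1..p-1}" using that(2) by auto
    from g_eq_iff[OF that(1) this(1) xy(1)] g_eq_iff[OF that(1) this(2) xy(3)]
    show ?thesis unfolding xy(2,4)[symmetric] by (simp only:)
  qed
  have "{(r, s). r \<in> {1..p-1} \<and> s \<in> {1..<p-1}
           \<and> g ((r * s + b) mod p) = i \<and> g ((r * (s + 1) + b) mod p) = j}
      = {(r, s). r \<in> {1..p-1} \<and> s \<in> {1..<p-1}
           \<and> (r * s + b) mod p = x \<and> (r * (s + 1) + b) mod p = y}"
    using consecutive_iff by blast
  moreover have "x \<noteq> y" using xy(2,4) assms(6) by blast
  ultimately show ?thesis
    unfolding tcount_def using card_consecutive_lattice_entries[OF assms(1,2) xy(1,3)] by simp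
qed

lemma leave_one_out_design_relabels_lattice:
  assumes "b < p" and "A = Dtilde p b \<or> A = Etilde p b"
  obtains g where "bij_betw g ({..<p} - {b}) {1..p-1}" and "A = (\<lambda>r k. g ((r * k + b) mod p))"
  using assms(2)
proof
  assume "A = Dtilde p b"
  then show thesis
    using that[OF bij_betw_loo[OF assms(1)]] by (simp add: Dtilde_def Dmat_def fun_eq_iff)
next
  assume "A = Etilde p b"
  have "williams p b \<in> {..<p}"
    by (rule bij_betw_apply[OF bij_betw_williams]) (use assms(1) in simp)
  then have "williams p b < p" by simp
  have "bij_betw (williams p) ({..<p} - {b}) ({..<p} - {williams p b})"
    by (rule bij_betw_DiffI[OF bij_betw_williams])
      (use assms(1) \<open>williams p b < p\<close> in \<open>auto simp: bij_betw_def\<close>)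
  from bij_betw_trans[OF this bij_betw_loo[OF \<open>williams p b < p\<close>]]
  show thesis using that \<open>A = Etilde p b\<close> by (simp add: Etilde_def Emat_def Dmat_def fun_eq_iff)
qed

theorem theorem1:
  fixes p b m :: nat and A :: "nat \<Rightarrow> nat \<Rightarrow> nat"
  assumes "prime p" and "odd p" and "m = p - 1" and "b < p"
    and "A = Dtilde p b \<or> A = Etilde p b"
  shows "latin_square m A
     \<and> pair_balanced m A
     \<and> (\<forall>i\<in>{1..m}. \<forall>j\<in>{1..m}. i \<noteq> j \<longrightarrow> tcount m A i j = 1)
     \<and> dH m A = m"
proof -
  obtain g where g: "bij_betw g ({..<p} - {b}) {1..p-1}" and A: "A = (\<lambda>r k. g ((r * k + b) mod p))"
    using leave_one_out_design_relabels_lattice[OF assms(4,5)] .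
  have latin: "latin_square m A"
    using latin_square_relabelled_lattice[OF assms(1,4) g] by (simp add: A assms(3))
  have tcount: "\<forall>i\<in>{1..m}. \<forall>j\<in>{1..m}. i \<noteq> j \<longrightarrow> tcount m A i j = 1"
    using tcount_relabelled_lattice[OF assms(1,4) g] by (simp add: A assms(3))
  then have "pair_balanced m A" by (simp add: pair_balanced_def)
  moreover have "2 \<le> m"
    using prime_ge_2_nat[OF assms(1)] assms(2,3) by (cases "p = 2") auto
  ultimately show ?thesis using latin tcount dH_latin_square by blast
qed

end
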